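(* Let $t\geq 1$ and let $C=\{a_1,\ldots,a_m\}$ be a fan grounded by a curve $\gamma=\gamma_1\cup\cdots\cup\gamma_m$. If each $a_i$ intersects $\gamma$ in at most $t$ points, then there is a subfan $C'=\{a_{i_1},\ldots,a_{i_r}\}\subseteq C$ with $i_1<\cdots<i_r$ and $r=\lfloor\log_{t+1}\log_{t+1}m\rfloor$ that is well-grounded by a subcurve $\gamma'=\gamma'_1\cup\cdots\cup\gamma'_r\subseteq\gamma$, with $\gamma'_j\supseteq\gamma_{i_j}$ for $1\leq j\leq r$.
   Context: All curves are simple; no two curves are tangent (a shared interior point is a proper crossing). A fan with apex $v$ is a collection of curves with common endpoint $v$. Let $\gamma$ be a curve with endpoints $p,q$, partitioned into subcurves $\gamma_1,\ldots,\gamma_m$ appearing in this order along $\gamma$ from $p$ to $q$ (consecutive pieces sharing an endpoint). A fan $C=\{a_1,\ldots,a_m\}$ with apex $v$ is grounded by $\gamma_1\cup\cdots\cup\gamma_m$ if $v\notin\gamma$ and each $a_i$ has its other endpoint on $\gamma_i$. It is well-grounded by $\gamma_1\cup\cdots\cup\gamma_m$ if in addition each $a_i$ intersects $\gamma$ only within $\gamma_i$. *)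

theory Defs
  imports "HOL-Analysis.Analysis"
begin

text \<open>A curve partitioned into consecutive pieces is represented by an arc g together with
breakpoints s 0 < s 1 < ... < s m in [0,1]; the whole curve is g ` {s 0..s m} and
the i-th piece (1 <= i <= m) is g ` {s (i-1)..s i}.\<close>

definition piece :: "(real \<Rightarrow> 'a) \<Rightarrow> (nat \<Rightarrow> real) \<Rightarrow> nat \<Rightarrow> 'a set" where
  "piece g s i = g ` {s (i - 1)..s i}"

definition whole :: "(real \<Rightarrow> 'a) \<Rightarrow> (nat \<Rightarrow> real) \<Rightarrow> nat \<Rightarrow> 'a set" where
  "whole g s m = g ` {s 0..s m}"

definition subdivided_curve :: "(real \<Rightarrow> real^2) \<Rightarrow> (nat \<Rightarrow> real) \<Rightarrow> nat \<Rightarrow> bool" where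
  "subdivided_curve g s m \<longleftrightarrow> arc g \<and> 0 \<le> s 0 \<and> s m \<le> 1 \<and> (\<forall>i<m. s i < s (Suc i))"

definition grounded ::
  "(nat \<Rightarrow> real \<Rightarrow> real^2) \<Rightarrow> real^2 \<Rightarrow> (real \<Rightarrow> real^2) \<Rightarrow> (nat \<Rightarrow> real) \<Rightarrow> nat \<Rightarrow> bool" where
  "grounded a v g s m \<longleftrightarrow> subdivided_curve g s m \<and> v \<notin> whole g s m \<and>
     (\<forall>i\<in>{1..m}. arc (a i) \<and> pathstart (a i) = v \<and> pathfinish (a i) \<in> piece g s i)"

definition well_grounded ::
  "(nat \<Rightarrow> real \<Rightarrow> real^2) \<Rightarrow> real^2 \<Rightarrow> (real \<Rightarrow> real^2) \<Rightarrow> (nat \<Rightarrow> real) \<Rightarrow> nat \<Rightarrow> bool" where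
  "well_grounded a v g s m \<longleftrightarrow> grounded a v g s m \<and>
     (\<forall>i\<in>{1..m}. path_image (a i) \<inter> whole g s m \<subseteq> piece g s i)"

end

theory Submission
  imports Defs
begin

text \<open>Work in the parameter interval of \<open>\<gamma>\<close>: piece \<open>i\<close> is \<open>[s (i-1), s i]\<close> and \<open>Q i\<close>, the set of
parameters where \<open>a i\<close> meets \<open>\<gamma>\<close>, has at most \<open>t\<close> points, one of them in piece \<open>i\<close>. Cut a run of
\<open>r^(k+1)\<close> consecutive pieces into \<open>r\<close> blocks of \<open>r^k\<close> pieces. If every block contains a piece
whose curve meets the run only inside that block, these \<open>r\<close> curves, with the blocks as the new
pieces, form a well-grounded subfan. Otherwise some block consists of pieces whose curves all
meet the run outside the block; restricted to that block each of them has lost a crossing,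
and we recurse there. After at most \<open>t\<close> rounds no crossings would be left, which is
impossible, so \<open>r^t \<le> m\<close> suffices; and the bound \<open>(t+1)^((t+1)^r) \<le> m\<close>
for \<open>r = \<lfloor>log (t+1) (log (t+1) m)\<rfloor>\<close> implies it.\<close>

lemma Bernoulli_inequality_nat: "1 + n * t \<le> (t + 1 :: nat) ^ n"
proof (induction n)
  case (Suc n)
  have "1 + Suc n * t \<le> (t + 1) * (1 + n * t)" by (simp add: algebra_simps)
  also have "\<dots> \<le> (t + 1) * (t + 1) ^ n" using Suc.IH by (rule mult_le_mono2)
  finally show ?case by simp
qed simp

lemma power_le_power_power:
  fixes n t :: nat
  assumes "t \<ge> 1"
  shows "n ^ t \<le> (t + 1) ^ ((t + 1) ^ n)"
proof -
  have "n < 2 ^ n" by (rule less_exp)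
  also have "(2::nat) ^ n \<le> (t + 1) ^ n" using assms by (intro power_mono) auto
  finally have "n ^ t \<le> ((t + 1) ^ n) ^ t" by (intro power_mono) auto
  also have "\<dots> = (t + 1) ^ (n * t)" by (simp add: power_mult)
  also have "\<dots> \<le> (t + 1) ^ ((t + 1) ^ n)"
    using Bernoulli_inequality_nat[of n t] by (intro power_increasing) auto
  finally show ?thesis .
qed

lemma power_power_le_of_le_log_log:
  fixes b m n :: nat
  assumes "1 < b" "0 < n" "real n \<le> log b (log b m)"
  shows "b ^ (b ^ n) \<le> m"
proof -
  have b: "1 < real b" using assms(1) by simp
  have log0: "log b 0 = 0" by (simp add: log_def)
  have "log b (log b m) \<noteq> 0" using assms(2,3) by auto
  then have "log b m \<noteq> 0" using log0 by auto
  then have "m \<noteq> 0" using log0 by (metis of_nat_0)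
  then have "0 \<le> log b m" using b by simp
  moreover note \<open>log b m \<noteq> 0\<close>
  ultimately have pos: "0 < log b m" by linarith
  have "real b ^ n \<le> log b m"
    using assms(3) le_log_iff[OF b pos] b by (simp add: powr_realpow)
  then have "real b powr real (b ^ n) \<le> m"
    using le_log_iff[OF b] \<open>m \<noteq> 0\<close> by simp
  then show ?thesis
    using b by (simp add: powr_realpow flip: of_nat_power)
qed

lemma floor_log_log_power_le:
  fixes t m :: nat
  assumes "t \<ge> 1"
  shows "(nat \<lfloor>log (t + 1) (log (t + 1) m)\<rfloor>) ^ t \<le> m"
proof -
  define n where "n = nat \<lfloor>log (t + 1) (log (t + 1) m)\<rfloor>"
  have "n ^ t \<le> m"
  proof (cases "n = 0")
    case False
    have "real n \<le> log (real (t + 1)) (log (real (t + 1)) m)"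
      using False unfolding n_def by linarith
    with False assms have "(t + 1) ^ ((t + 1) ^ n) \<le> m"
      by (intro power_power_le_of_le_log_log) auto
    then show ?thesis
      using power_le_power_power[OF assms, of n] by linarith
  qed (use assms in \<open>simp add: power_0_left\<close>)
  then show ?thesis by (simp add: n_def)
qed

text \<open>The parameter-space form of a well-grounded subfan: \<open>u\<close> subdivides a part of \<open>[s lo, s hi]\<close>
into \<open>r\<close> new pieces, the \<open>j\<close>-th containing old piece \<open>idx j\<close> and all crossings of \<open>Q (idx j)\<close>
with \<open>[u 0, u r]\<close>.\<close>
definition well_separated ::
  "(nat \<Rightarrow> real) \<Rightarrow> (nat \<Rightarrow> real set) \<Rightarrow> nat \<Rightarrow> nat \<Rightarrow> nat \<Rightarrow> (nat \<Rightarrow> nat) \<Rightarrow> (nat \<Rightarrow> real) \<Rightarrow> bool"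
  where
  "well_separated s Q r lo hi idx u \<longleftrightarrow>
     strict_mono_on {1..r} idx \<and> idx ` {1..r} \<subseteq> {lo<..hi} \<and>
     (\<forall>j\<in>{1..r}. u (j - 1) < u j) \<and> s lo \<le> u 0 \<and> u r \<le> s hi \<and>
     (\<forall>j\<in>{1..r}. {s (idx j - 1)..s (idx j)} \<subseteq> {u (j - 1)..u j} \<and>
                  Q (idx j) \<inter> {u 0..u r} \<subseteq> {u (j - 1)..u j})"

lemma well_separated_widen:
  assumes "well_separated s Q r lo hi idx u" "lo' \<le> lo" "hi \<le> hi'" "s lo' \<le> s lo" "s hi \<le> s hi'"
  shows "well_separated s Q r lo' hi' idx u"
  using assms unfolding well_separated_def by (auto 4 3)

lemma well_separated_blocks:
  fixes s :: "nat \<Rightarrow> real"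
  assumes s: "strict_mono_on {lo..lo + r * M} s"
    and f: "\<And>j. j \<in> {1..r} \<Longrightarrow> f j \<in> {lo + (j - 1) * M<..lo + j * M}"
    and Qf: "\<And>j. j \<in> {1..r} \<Longrightarrow>
               Q (f j) \<inter> {s lo..s (lo + r * M)} \<subseteq> {s (lo + (j - 1) * M)..s (lo + j * M)}"
  shows "well_separated s Q r lo (lo + r * M) f (\<lambda>j. s (lo + j * M))"
  unfolding well_separated_def
proof (intro conjI ballI)
  have s_le: "s x \<le> s y" if "lo \<le> x" "x \<le> y" "y \<le> lo + r * M" for x y
    using that by (intro strict_mono_on_leD[OF s]) auto
  have block: "lo + (j - 1) * M < f j" "f j \<le> lo + j * M" "j * M \<le> r * M" if "j \<in> {1..r}" for j
    using f[OF that] that by auto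
  show "strict_mono_on {1..r} f"
  proof (rule strict_mono_onI)
    fix i j assume ij: "i \<in> {1..r}" "j \<in> {1..r}" "i < j"
    then have "i * M \<le> (j - 1) * M" by (intro mult_le_mono1) linarith
    then show "f i < f j" using block(1)[OF ij(2)] block(2)[OF ij(1)] by linarith
  qed
  show "f ` {1..r} \<subseteq> {lo<..lo + r * M}"
  proof (rule image_subsetI)
    fix j assume j: "j \<in> {1..r}"
    have "lo < f j" "f j \<le> lo + r * M" using block[OF j] by linarith+
    then show "f j \<in> {lo<..lo + r * M}" by simp
  qed
  fix j assume j: "j \<in> {1..r}"
  have "lo + (j - 1) * M < lo + j * M" "lo + j * M \<le> lo + r * M"
    using block[OF j] by linarith+
  then show "s (lo + (j - 1) * M) < s (lo + j * M)"
    by (intro strict_mono_onD[OF s]) auto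
  have "s (lo + (j - 1) * M) \<le> s (f j - 1)" "s (f j) \<le> s (lo + j * M)"
    using block[OF j] by (intro s_le; linarith)+
  then show "{s (f j - 1)..s (f j)} \<subseteq> {s (lo + (j - 1) * M)..s (lo + j * M)}"
    by auto
  show "Q (f j) \<inter> {s (lo + 0 * M)..s (lo + r * M)} \<subseteq> {s (lo + (j - 1) * M)..s (lo + j * M)}"
    using Qf[OF j] by simp
qed simp_all

lemma well_separated_exists:
  fixes s :: "nat \<Rightarrow> real" and Q :: "nat \<Rightarrow> real set"
  assumes "strict_mono_on {lo..lo + n} s" "r ^ k \<le> n"
    and "\<And>i. i \<in> {lo<..lo + n} \<Longrightarrow> finite (Q i)"
    and "\<And>i. i \<in> {lo<..lo + n} \<Longrightarrow> card (Q i \<inter> {s lo..s (lo + n)}) \<le> k"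
    and "\<And>i. i \<in> {lo<..lo + n} \<Longrightarrow> Q i \<inter> {s (i - 1)..s i} \<noteq> {}"
  shows "\<exists>idx u. well_separated s Q r lo (lo + n) idx u"
  using assms
proof (induction k arbitrary: lo n)
  case 0
  then have i: "Suc lo \<in> {lo<..lo + n}" by simp
  have "s (Suc lo) \<le> s (lo + n)"
    using i by (intro strict_mono_on_leD[OF "0.prems"(1)]) auto
  then have "Q (Suc lo) \<inter> {s lo..s (Suc lo)} \<subseteq> Q (Suc lo) \<inter> {s lo..s (lo + n)}" by auto
  moreover have "Q (Suc lo) \<inter> {s lo..s (lo + n)} = {}"
    using "0.prems"(3,4)[OF i] by simp
  ultimately show ?case using "0.prems"(5)[OF i] by simp
next
  case (Suc k)
  note s_mono = Suc.prems(1)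
  define M where "M = r ^ k"
  define W where "W = {s lo..s (lo + r * M)}"
  define cell where "cell j = {s (lo + (j - 1) * M)..s (lo + j * M)}" for j
  have rM: "r * M \<le> n" using Suc.prems(2) by (simp add: M_def)
  have s_le: "s x \<le> s y" if "lo \<le> x" "x \<le> y" "y \<le> lo + n" for x y
    using that by (intro strict_mono_on_leD[OF s_mono]) auto
  show ?case
  proof (cases "\<exists>j\<in>{1..r}. \<forall>i\<in>{lo + (j - 1) * M<..lo + j * M}. \<not> Q i \<inter> W \<subseteq> cell j")
    case True
    then obtain j where j: "j \<in> {1..r}"
      and escapes: "\<And>i. i \<in> {lo + (j - 1) * M<..lo + j * M} \<Longrightarrow> \<not> Q i \<inter> W \<subseteq> cell j"
      by blast
    define lo' where "lo' = lo + (j - 1) * M"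
    have lo'M: "lo' + M = lo + j * M"
      using j by (cases j) (simp_all add: lo'_def)
    have "j * M \<le> r * M" using j by simp
    then have block: "lo \<le> lo'" "lo' + M \<le> lo + n"
      using lo'M rM unfolding lo'_def by linarith+
    have cell_j: "cell j = {s lo'..s (lo' + M)}"
      unfolding cell_def lo'M by (simp add: lo'_def)
    have "s lo \<le> s lo'" "s (lo' + M) \<le> s (lo + n)"
      using block by (auto intro: s_le)
    then have sub: "{s lo'..s (lo' + M)} \<subseteq> {s lo..s (lo + n)}" by auto
    have "W \<subseteq> {s lo..s (lo + n)}"
      using rM by (auto simp: W_def intro: order.trans[OF _ s_le])
    have "\<exists>idx u. well_separated s Q r lo' (lo' + M) idx u"
    proof (rule Suc.IH)
      show "strict_mono_on {lo'..lo' + M} s"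
        using block by (auto intro: monotone_on_subset[OF s_mono])
      show "r ^ k \<le> M" by (simp add: M_def)
      fix i assume i: "i \<in> {lo'<..lo' + M}"
      then have i': "i \<in> {lo<..lo + n}" using block by auto
      show "finite (Q i)" "Q i \<inter> {s (i - 1)..s i} \<noteq> {}"
        using Suc.prems(3,5)[OF i'] by auto
      obtain x where x: "x \<in> Q i" "x \<in> W" "x \<notin> cell j"
        using escapes[of i] i lo'M by (auto simp: lo'_def)
      have "Q i \<inter> {s lo'..s (lo' + M)} \<subset> Q i \<inter> {s lo..s (lo + n)}"
        using x \<open>W \<subseteq> _\<close> cell_j sub by blast
      then have "card (Q i \<inter> {s lo'..s (lo' + M)}) < card (Q i \<inter> {s lo..s (lo + n)})"
        using Suc.prems(3)[OF i'] by (intro psubset_card_mono) auto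
      then show "card (Q i \<inter> {s lo'..s (lo' + M)}) \<le> k"
        using Suc.prems(4)[OF i'] by simp
    qed
    then obtain idx u where "well_separated s Q r lo' (lo' + M) idx u" by blast
    then have "well_separated s Q r lo (lo + n) idx u"
      by (rule well_separated_widen) (use block in \<open>auto intro: s_le\<close>)
    then show ?thesis by blast
  next
    case False
    then obtain f where f: "\<And>j. j \<in> {1..r} \<Longrightarrow> f j \<in> {lo + (j - 1) * M<..lo + j * M}"
      and confined: "\<And>j. j \<in> {1..r} \<Longrightarrow> Q (f j) \<inter> W \<subseteq> cell j"
      by metis
    have "well_separated s Q r lo (lo + r * M) f (\<lambda>j. s (lo + j * M))"
      using rM f confined
      by (intro well_separated_blocks monotone_on_subset[OF s_mono]) (auto simp: W_def cell_def)
    then have "well_separated s Q r lo (lo + n) f (\<lambda>j. s (lo + j * M))"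
      by (rule well_separated_widen) (use rM in \<open>auto intro: s_le\<close>)
    then show ?thesis by blast
  qed
qed

lemma strict_mono_on_atMost_SucI:
  fixes f :: "nat \<Rightarrow> 'a::preorder"
  assumes "\<And>i. i < m \<Longrightarrow> f i < f (Suc i)"
  shows "strict_mono_on {..m} f"
proof (rule strict_mono_onI)
  fix i j :: nat assume "i \<in> {..m}" "j \<in> {..m}" "i < j"
  then have "Suc i \<le> j" "j \<le> m" by auto
  then show "f i < f j"
  proof (induction j rule: dec_induct)
    case base
    then show ?case using assms by simp
  next
    case (step n)
    then have "f i < f n" "f n < f (Suc n)" using assms by simp_all
    then show ?case by (rule less_trans)
  qed
qed

lemma arc_preimage_finite_card:
  assumes "arc g" "finite (A \<inter> path_image g)"
  shows "finite {x\<in>{0..1}. g x \<in> A}" "card {x\<in>{0..1}. g x \<in> A} = card (A \<inter> path_image g)"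
proof -
  have "inj_on g {0..1}" using assms(1) by (simp add: arc_def)
  then have "inj_on g {x\<in>{0..1}. g x \<in> A}" by (rule inj_on_subset) blast
  moreover have "g ` {x\<in>{0..1}. g x \<in> A} = A \<inter> path_image g"
    unfolding path_image_def by blast
  ultimately have bij: "bij_betw g {x\<in>{0..1}. g x \<in> A} (A \<inter> path_image g)"
    unfolding bij_betw_def by blast
  then show "finite {x\<in>{0..1}. g x \<in> A}"
    using assms(2) bij_betw_finite by blast
  show "card {x\<in>{0..1}. g x \<in> A} = card (A \<inter> path_image g)"
    using bij by (rule bij_betw_same_card)
qed

lemma subdivided_curve_strict_mono:
  assumes "subdivided_curve g s m"
  shows "strict_mono_on {0..m} s"
proof -
  have "strict_mono_on {..m} s"
  proof (rule strict_mono_on_atMost_SucI)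
    fix i assume "i < m"
    then show "s i < s (Suc i)" using assms by (simp add: subdivided_curve_def)
  qed
  then show ?thesis by (simp add: atLeast0AtMost)
qed

lemma grounded_endpoint_preimage:
  assumes "grounded a v g s m" "s 0 = 0" "s m = 1" "i \<in> {1..m}"
  shows "{x\<in>{0..1}. g x \<in> path_image (a i)} \<inter> {s (i - 1)..s i} \<noteq> {}"
proof -
  have "subdivided_curve g s m"
    using assms(1) unfolding grounded_def by (rule conjunct1)
  then have mono: "strict_mono_on {0..m} s"
    by (rule subdivided_curve_strict_mono)
  have "pathfinish (a i) \<in> g ` {s (i - 1)..s i}"
    using assms(1,4) by (simp add: grounded_def piece_def)
  then obtain x where x: "x \<in> {s (i - 1)..s i}" "g x = pathfinish (a i)"
    by (metis imageE)
  have "s 0 \<le> s (i - 1)" "s i \<le> s m"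
    using assms(4) by (auto intro: strict_mono_on_leD[OF mono])
  with x assms(2,3) have "x \<in> {0..1}" by simp
  moreover have "g x \<in> path_image (a i)"
    using x(2) by (simp add: pathfinish_in_path_image)
  ultimately show ?thesis using x(1) by blast
qed

lemma well_grounded_of_well_separated:
  assumes ground: "grounded a v g s m" and "s 0 = 0" "s m = 1"
    and sep: "well_separated s (\<lambda>i. {x\<in>{0..1}. g x \<in> path_image (a i)}) r 0 m idx u"
  shows "well_grounded (\<lambda>j. a (idx j)) v g u r"
    and "\<forall>j\<in>{1..r}. piece g s (idx j) \<subseteq> piece g u j"
proof -
  have arc: "arc g" and v: "v \<notin> g ` {0..1}"
    and fan: "\<And>i. i \<in> {1..m} \<Longrightarrow> arc (a i) \<and> pathstart (a i) = v \<and> pathfinish (a i) \<in> piece g s i"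
    using ground assms(2,3) by (simp_all add: grounded_def subdivided_curve_def whole_def)
  have idx: "\<And>j. j \<in> {1..r} \<Longrightarrow> idx j \<in> {1..m}"
    and u_step: "\<And>j. j \<in> {1..r} \<Longrightarrow> u (j - 1) < u j"
    and bounds: "0 \<le> u 0" "u r \<le> 1"
    and cells: "\<And>j. j \<in> {1..r} \<Longrightarrow> {s (idx j - 1)..s (idx j)} \<subseteq> {u (j - 1)..u j}"
    and confined: "\<And>j. j \<in> {1..r} \<Longrightarrow>
       {x\<in>{0..1}. g x \<in> path_image (a (idx j))} \<inter> {u 0..u r} \<subseteq> {u (j - 1)..u j}"
    using sep assms(2,3) unfolding well_separated_def by (auto 0 3)
  then have window: "{u 0..u r} \<subseteq> {0..1}" by auto
  show pieces: "\<forall>j\<in>{1..r}. piece g s (idx j) \<subseteq> piece g u j"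
    using cells unfolding piece_def by (simp add: image_mono)
  have "\<forall>i<r. u i < u (Suc i)"
    using u_step[of "Suc _"] by simp
  then have "subdivided_curve g u r"
    using arc bounds unfolding subdivided_curve_def by auto
  moreover have "v \<notin> whole g u r"
    using v window unfolding whole_def by blast
  moreover have "arc (a (idx j)) \<and> pathstart (a (idx j)) = v \<and> pathfinish (a (idx j)) \<in> piece g u j"
    if j: "j \<in> {1..r}" for j
    using fan[OF idx[OF j]] pieces j by blast
  moreover have "path_image (a (idx j)) \<inter> whole g u r \<subseteq> piece g u j" if j: "j \<in> {1..r}" for j
  proof
    fix y assume y: "y \<in> path_image (a (idx j)) \<inter> whole g u r"
    then obtain x where x: "x \<in> {u 0..u r}" "y = g x" unfolding whole_def by blast
    with y window have "x \<in> {x\<in>{0..1}. g x \<in> path_image (a (idx j))} \<inter> {u 0..u r}" by auto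
    with confined[OF j] x show "y \<in> piece g u j" unfolding piece_def by blast
  qed
  ultimately show "well_grounded (\<lambda>j. a (idx j)) v g u r"
    unfolding well_grounded_def grounded_def by blast
qed

lemma grounded_fan_well_grounded_subfan:
  fixes t m r :: nat
  assumes ground: "grounded a v g s m" and "s 0 = 0" and "s m = 1"
    and crossings: "\<forall>i\<in>{1..m}. finite (path_image (a i) \<inter> path_image g)
                      \<and> card (path_image (a i) \<inter> path_image g) \<le> t"
    and "r ^ t \<le> m"
  shows "\<exists>idx u. strict_mono_on {1..r} idx \<and> idx ` {1..r} \<subseteq> {1..m}
           \<and> well_grounded (\<lambda>j. a (idx j)) v g u r
           \<and> (\<forall>j\<in>{1..r}. piece g s (idx j) \<subseteq> piece g u j)"
proof -
  define Q where "Q i = {x\<in>{0..1}. g x \<in> path_image (a i)}" for i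
  have curve: "subdivided_curve g s m"
    using ground unfolding grounded_def by (rule conjunct1)
  then have arc: "arc g" by (simp add: subdivided_curve_def)
  have "\<exists>idx u. well_separated s Q r 0 (0 + m) idx u"
  proof (rule well_separated_exists)
    show "strict_mono_on {0..0 + m} s" using curve by (simp add: subdivided_curve_strict_mono)
    show "r ^ t \<le> m" by fact
    fix i assume "i \<in> {0<..0 + m}"
    then have i: "i \<in> {1..m}" by auto
    have fin: "finite (path_image (a i) \<inter> path_image g)"
      and card: "card (path_image (a i) \<inter> path_image g) \<le> t"
      using crossings i by auto
    show "finite (Q i)"
      unfolding Q_def using arc fin by (rule arc_preimage_finite_card)
    have "card (Q i \<inter> {s 0..s (0 + m)}) \<le> card (Q i)"
      using \<open>finite (Q i)\<close> by (intro card_mono) auto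
    also have "\<dots> \<le> t"
      unfolding Q_def using arc_preimage_finite_card(2)[OF arc fin] card by simp
    finally show "card (Q i \<inter> {s 0..s (0 + m)}) \<le> t" .
    show "Q i \<inter> {s (i - 1)..s i} \<noteq> {}"
      unfolding Q_def using assms(1-3) i by (rule grounded_endpoint_preimage)
  qed
  then obtain idx u where sep: "well_separated s Q r 0 m idx u" by auto
  then have "strict_mono_on {1..r} idx" "idx ` {1..r} \<subseteq> {1..m}"
    unfolding well_separated_def by auto
  with well_grounded_of_well_separated[OF assms(1-3) sep[unfolded Q_def]] show ?thesis
    by blast
qed

theorem mainTheorem6:
  fixes t m :: nat and a :: "nat \<Rightarrow> real \<Rightarrow> real^2" and v :: "real^2"
    and g :: "real \<Rightarrow> real^2" and s :: "nat \<Rightarrow> real"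
  assumes "t \<ge> 1"
    and "grounded a v g s m" and "s 0 = 0" and "s m = 1"
    and "\<forall>i\<in>{1..m}. finite (path_image (a i) \<inter> path_image g)
                      \<and> card (path_image (a i) \<inter> path_image g) \<le> t"
  shows "\<exists>idx :: nat \<Rightarrow> nat. \<exists>u :: nat \<Rightarrow> real.
           strict_mono_on {1..nat \<lfloor>log (t + 1) (log (t + 1) m)\<rfloor>} idx
         \<and> idx ` {1..nat \<lfloor>log (t + 1) (log (t + 1) m)\<rfloor>} \<subseteq> {1..m}
         \<and> well_grounded (\<lambda>j. a (idx j)) v g u (nat \<lfloor>log (t + 1) (log (t + 1) m)\<rfloor>)
         \<and> (\<forall>j\<in>{1..nat \<lfloor>log (t + 1) (log (t + 1) m)\<rfloor>}. piece g s (idx j) \<subseteq> piece g u j)"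
  using grounded_fan_well_grounded_subfan[OF assms(2-5) floor_log_log_power_le[OF assms(1)]] .

end
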